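(* Fix $\boldsymbol{x}\in\mathcal{R}_r$ and consider the second-order cone program, in the variable $(\boldsymbol{u},d,t)\in\mathbb{R}^m\times\mathbb{R}\times\mathbb{R}$, $$\min\ t\quad\text{s.t.}\quad \Big\|E\begin{bmatrix}\boldsymbol{u}\\ d\end{bmatrix}\Big\|_2\le t,\qquad \hat{\dot V}(\boldsymbol{x},\boldsymbol{u})+m_r^V+\beta_r\sigma_r^V+\lambda V(\boldsymbol{x})\le d,\qquad \|A_r^h(\boldsymbol{x})\boldsymbol{u}+\boldsymbol{b}_r^h(\boldsymbol{x})\|_2\le \boldsymbol{c}_r^h(\boldsymbol{x})\boldsymbol{u}+d_r^h(\boldsymbol{x}),$$ with $E=\operatorname{diag}(1,\dots,1,\sqrt\rho)$. If this program is feasible, then $$1-\frac{1}{\beta_r^2}\boldsymbol{\phi}_r\,\Sigma_r^h(\boldsymbol{x})^{-1}\boldsymbol{\phi}_r^T\le 0,\qquad\text{where } \boldsymbol{\phi}_r=\begin{bmatrix}\varphi_r^{hf}+\mu_r^{h1} & \boldsymbol{c}_r^h(\boldsymbol{x})\end{bmatrix}\in\mathbb{R}^{1\times(m+1)}.$$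
   Context: Setting: switching system $\dot{\boldsymbol{x}}=\sum_{r=1}^R\delta_r(f_r(\boldsymbol{x})+g_r(\boldsymbol{x})\boldsymbol{u})$, $\boldsymbol{x}\in\mathcal{X}\subset\mathbb{R}^n$, $\boldsymbol{u}\in\mathbb{R}^m$, with pairwise disjoint regions $\mathcal{R}_r$ covering $\mathcal{X}$ and $\delta_r$ the indicator of $\mathcal{R}_r$; nominal model $\dot{\boldsymbol{x}}=\hat f(\boldsymbol{x})+\hat g(\boldsymbol{x})\boldsymbol{u}$; continuously differentiable CLF $V$ and CBF $h$ with nominal derivative $\hat{\dot V}=L_{\hat f}V+L_{\hat g}V\boldsymbol{u}$; constants $\rho>0$, $\lambda>0$, $\beta_r>0$. Write $\boldsymbol{y}=[1,\boldsymbol{u}^T]^T$. For region $r$, Gaussian-process posteriors (zero prior mean, kernel $\boldsymbol{y}^T\operatorname{diag}(k_r^1(\boldsymbol{x},\boldsymbol{x}'),\dots,k_r^{m+1}(\boldsymbol{x},\boldsymbol{x}'))\boldsymbol{y}'$ with positive-definite base kernels, noise variance $\sigma_n^2>0$) give for the CLF residual a mean $m_r^V=\boldsymbol{\mu}_r^V(\boldsymbol{x})\boldsymbol{y}$ and standard deviation $\sigma_r^V=\sqrt{\boldsymbol{y}^T\Sigma_r^V(\boldsymbol{x})\boldsymbol{y}}$, and for the CBF residual a mean $\boldsymbol{\mu}_r^h(\boldsymbol{x})\boldsymbol{y}$ ($\boldsymbol{\mu}_r^h\in\mathbb{R}^{1\times(m+1)}$) and standard deviation $\sqrt{\boldsymbol{y}^T\Sigma_r^h(\boldsymbol{x})\boldsymbol{y}}$,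 where the posterior covariance matrix $\Sigma_r^h(\boldsymbol{x})=\Lambda_r(\boldsymbol{x},\boldsymbol{x})-\bar K_r(K_r+\sigma_n^2I)^{-1}\bar K_r^T$ is taken (as in the paper) to be symmetric positive definite. Write $\mu_r^{h1}$ for the first entry and $\boldsymbol{\mu}_r^{hm}$ for the last $m$ entries of $\boldsymbol{\mu}_r^h$. Let $L_r$ satisfy $L_r^TL_r=\Sigma_r^h(\boldsymbol{x})$, with first column $\boldsymbol{l}_r^1$ and last $m$ columns $L_r^m$. Let $\boldsymbol{\varphi}_r^h=[L_{f_r}h-L_{\hat f}h,\ L_{g_r}h-L_{\hat g}h]\in\mathbb{R}^{1\times(m+1)}$ with first entry $\varphi_r^{hf}$ and last $m$ entries $\boldsymbol{\varphi}_r^{hg}$. Define $A_r^h=\beta_rL_r^m$, $\boldsymbol{b}_r^h=\beta_r\boldsymbol{l}_r^1$, $\boldsymbol{c}_r^h=\boldsymbol{\varphi}_r^{hg}+\boldsymbol{\mu}_r^{hm}$, $d_r^h=\varphi_r^{hf}+\mu_r^{h1}$. *)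

theory Defs
  imports "Jordan_Normal_Form.Gauss_Jordan_Elimination"
begin

definition vnorm2 :: "real vec \<Rightarrow> real" where
  "vnorm2 v = sqrt (v \<bullet> v)"

definition yvec :: "real vec \<Rightarrow> real vec" where
  "yvec u = vCons 1 u"

definition first_col :: "real mat \<Rightarrow> real vec" where
  "first_col L = col L 0"

definition last_cols :: "nat \<Rightarrow> real mat \<Rightarrow> real mat" where
  "last_cols m L = mat (dim_row L) m (\<lambda>(i, j). L $$ (i, j + 1))"

definition first_entry :: "real vec \<Rightarrow> real" where
  "first_entry v = v $ 0"

definition last_entries :: "nat \<Rightarrow> real vec \<Rightarrow> real vec" where
  "last_entries m v = vec m (\<lambda>i. v $ (i + 1))"

(* A_r^h = beta_r L_r^m, b_r^h = beta_r l_r^1,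
   c_r^h = phi_r^{hg} + mu_r^{hm}, d_r^h = phi_r^{hf} + mu_r^{h1} *)
definition A_h :: "nat \<Rightarrow> real \<Rightarrow> real mat \<Rightarrow> real mat" where
  "A_h m \<beta> L = \<beta> \<cdot>\<^sub>m last_cols m L"

definition b_h :: "real \<Rightarrow> real mat \<Rightarrow> real vec" where
  "b_h \<beta> L = \<beta> \<cdot>\<^sub>v first_col L"

definition c_h :: "nat \<Rightarrow> real vec \<Rightarrow> real vec \<Rightarrow> real vec" where
  "c_h m \<phi>h \<mu>h = last_entries m \<phi>h + last_entries m \<mu>h"

definition d_h :: "real vec \<Rightarrow> real vec \<Rightarrow> real" where
  "d_h \<phi>h \<mu>h = first_entry \<phi>h + first_entry \<mu>h"

definition E_mat :: "nat \<Rightarrow> real \<Rightarrow> real mat" where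
  "E_mat m \<rho> = mat (m + 1) (m + 1)
     (\<lambda>(i, j). if i = j then (if i = m then sqrt \<rho> else 1) else 0)"

definition sym_pos_def :: "nat \<Rightarrow> real mat \<Rightarrow> bool" where
  "sym_pos_def n S \<longleftrightarrow> S \<in> carrier_mat n n \<and> S\<^sup>T = S \<and>
     (\<forall>v \<in> carrier_vec n. v \<noteq> 0\<^sub>v n \<longrightarrow> v \<bullet> (S *\<^sub>v v) > 0)"

definition sym_pos_semidef :: "nat \<Rightarrow> real mat \<Rightarrow> bool" where
  "sym_pos_semidef n S \<longleftrightarrow> S \<in> carrier_mat n n \<and> S\<^sup>T = S \<and>
     (\<forall>v \<in> carrier_vec n. v \<bullet> (S *\<^sub>v v) \<ge> 0)"

definition socp_feasible where
  "socp_feasible m \<rho> lam \<beta> LfV LgV Vx \<mu>V \<Sigma>V L \<phi>h \<mu>h \<longleftrightarrow>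
    (\<exists>u \<in> carrier_vec m. \<exists>d t :: real.
       vnorm2 (E_mat m \<rho> *\<^sub>v (u @\<^sub>v vec 1 (\<lambda>_. d))) \<le> t
     \<and> LfV + LgV \<bullet> u + \<mu>V \<bullet> yvec u + \<beta> * sqrt (yvec u \<bullet> (\<Sigma>V *\<^sub>v yvec u)) + lam * Vx \<le> d
     \<and> vnorm2 (A_h m \<beta> L *\<^sub>v u + b_h \<beta> L) \<le> c_h m \<phi>h \<mu>h \<bullet> u + d_h \<phi>h \<mu>h)"

end

(* A feasible point u gives y = [1; u] with beta * sqrt (y^T Sigma y) <= phi y, since
   ||A u + b|| = beta ||L y|| and L^T L = Sigma. Cauchy-Schwarz for the inner product
   induced by Sigma, applied to Sigma^-1 phi^T and y, gives
   (phi y)^2 <= (phi Sigma^-1 phi^T) (y^T Sigma y), and y^T Sigma y > 0 because y has first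
   entry 1; dividing yields beta^2 <= phi Sigma^-1 phi^T. *)
theory Submission
  imports Defs "Jordan_Normal_Form.Determinant" "HOL-Analysis.Convex"
begin

lemma scalar_prod_Cauchy_Schwarz:
  fixes v w :: "'a::linordered_field vec"
  assumes "v \<in> carrier_vec n" and "w \<in> carrier_vec n"
  shows "(v \<bullet> w)\<^sup>2 \<le> (v \<bullet> v) * (w \<bullet> w)"
  using assms Cauchy_Schwarz_ineq_sum[of "\<lambda>i. v $ i" "\<lambda>i. w $ i" "{0..<n}"]
  by (simp add: scalar_prod_def power2_eq_square)

lemma gram_scalar_prod:
  fixes L :: "'a::comm_semiring_0 mat"
  assumes L: "L \<in> carrier_mat k n" and v: "v \<in> carrier_vec n" and w: "w \<in> carrier_vec n"
  shows "(L *\<^sub>v v) \<bullet> (L *\<^sub>v w) = v \<bullet> ((L\<^sup>T * L) *\<^sub>v w)"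
proof -
  have "(L *\<^sub>v v) \<bullet> (L *\<^sub>v w) = (L\<^sup>T *\<^sub>v (L *\<^sub>v w)) \<bullet> v"
    using transpose_vec_mult_scalar[OF L v, of "L *\<^sub>v w"] L v w
    by (metis comm_scalar_prod mult_mat_vec_carrier)
  also have "\<dots> = v \<bullet> ((L\<^sup>T * L) *\<^sub>v w)"
    using L v w by (simp add: assoc_mult_mat_vec comm_scalar_prod[of v n])
  finally show ?thesis .
qed

lemma gram_Cauchy_Schwarz:
  fixes L :: "'a::linordered_field mat"
  assumes L: "L \<in> carrier_mat k n" and v: "v \<in> carrier_vec n" and w: "w \<in> carrier_vec n"
  shows "(v \<bullet> ((L\<^sup>T * L) *\<^sub>v w))\<^sup>2
    \<le> (v \<bullet> ((L\<^sup>T * L) *\<^sub>v v)) * (w \<bullet> ((L\<^sup>T * L) *\<^sub>v w))"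
  using scalar_prod_Cauchy_Schwarz[of "L *\<^sub>v v" k "L *\<^sub>v w"] L v w
  by (simp add: gram_scalar_prod)

lemma vnorm2_smult: "vnorm2 (a \<cdot>\<^sub>v v) = \<bar>a\<bar> * vnorm2 v"
proof -
  have "(a \<cdot>\<^sub>v v) \<bullet> (a \<cdot>\<^sub>v v) = a\<^sup>2 * (v \<bullet> v)"
    by (simp add: power2_eq_square)
  then show ?thesis
    by (simp add: vnorm2_def real_sqrt_mult)
qed

lemma vnorm2_mult_mat_vec:
  assumes "L \<in> carrier_mat k n" and "y \<in> carrier_vec n"
  shows "vnorm2 (L *\<^sub>v y) = sqrt (y \<bullet> ((L\<^sup>T * L) *\<^sub>v y))"
  using assms by (simp add: vnorm2_def gram_scalar_prod)

lemma sym_pos_def_mat_inverse: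
  assumes "sym_pos_def n S"
  obtains B where "mat_inverse S = Some B" and "S * B = 1\<^sub>m n" and "B \<in> carrier_mat n n"
proof -
  have S: "S \<in> carrier_mat n n"
    and pos: "\<And>v. v \<in> carrier_vec n \<Longrightarrow> v \<noteq> 0\<^sub>v n \<Longrightarrow> v \<bullet> (S *\<^sub>v v) > 0"
    using assms unfolding sym_pos_def_def by auto
  have "det S \<noteq> 0"
    using det_0_iff_vec_prod_zero[OF S] pos by fastforce
  then have "S \<in> Units (ring_mat TYPE(real) n ())"
    by (rule det_non_zero_imp_unit[OF S])
  then obtain B where "mat_inverse S = Some B"
    using mat_inverse(1)[OF S] by fastforce
  with mat_inverse(2)[OF S this] show thesis
    using that by blast
qed

lemma inverse_form_lower_bound:
  fixes S B L :: "real mat"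
  assumes L: "L \<in> carrier_mat k n" and LS: "L\<^sup>T * L = S"
    and B: "B \<in> carrier_mat n n" and SB: "S * B = 1\<^sub>m n"
    and \<phi>: "\<phi> \<in> carrier_vec n" and y: "y \<in> carrier_vec n"
    and pos: "y \<bullet> (S *\<^sub>v y) > 0" and "\<beta> \<ge> 0"
    and cone: "\<beta> * sqrt (y \<bullet> (S *\<^sub>v y)) \<le> \<phi> \<bullet> y"
  shows "\<beta>\<^sup>2 \<le> \<phi> \<bullet> (B *\<^sub>v \<phi>)"
proof -
  define z where "z = B *\<^sub>v \<phi>"
  have z: "z \<in> carrier_vec n"
    using B \<phi> by (simp add: z_def)
  have "S \<in> carrier_mat n n"
    using L LS by auto
  then have Sz: "S *\<^sub>v z = \<phi>"
    using B \<phi> SB by (simp add: z_def flip: assoc_mult_mat_vec)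
  have \<phi>y: "\<phi> \<bullet> y = z \<bullet> (S *\<^sub>v y)"
    using gram_scalar_prod[OF L z y] gram_scalar_prod[OF L y z] L y z Sz LS \<phi>
    by (metis comm_scalar_prod mult_mat_vec_carrier)
  have \<phi>z: "\<phi> \<bullet> z = z \<bullet> (S *\<^sub>v z)"
    using Sz \<phi> z by (simp add: comm_scalar_prod[of \<phi> n])
  have "\<beta>\<^sup>2 * (y \<bullet> (S *\<^sub>v y)) = (\<beta> * sqrt (y \<bullet> (S *\<^sub>v y)))\<^sup>2"
    using pos by (simp add: power_mult_distrib)
  also have "\<dots> \<le> (\<phi> \<bullet> y)\<^sup>2"
    using cone \<open>\<beta> \<ge> 0\<close> pos by (intro power_mono) auto
  also have "\<dots> \<le> (\<phi> \<bullet> z) * (y \<bullet> (S *\<^sub>v y))"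
    using gram_Cauchy_Schwarz[OF L z y] by (simp add: LS \<phi>y \<phi>z)
  finally show ?thesis
    using pos by (simp add: z_def)
qed

lemma A_h_mult_plus_b_h:
  assumes L: "L \<in> carrier_mat k (m + 1)" and u: "u \<in> carrier_vec m"
  shows "A_h m \<beta> L *\<^sub>v u + b_h \<beta> L = \<beta> \<cdot>\<^sub>v (L *\<^sub>v yvec u)"
proof (rule eq_vecI)
  fix i
  assume "i < dim_vec (\<beta> \<cdot>\<^sub>v (L *\<^sub>v yvec u))"
  then have i: "i < k"
    using L by simp
  have "row L i = vCons (L $$ (i, 0)) (row (last_cols m L) i)"
    using L i by (intro eq_vecI) (auto simp: vec_index_vCons last_cols_def)
  then show "(A_h m \<beta> L *\<^sub>v u + b_h \<beta> L) $ i = (\<beta> \<cdot>\<^sub>v (L *\<^sub>v yvec u)) $ i"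
    using i L u
    by (simp add: A_h_def b_h_def first_col_def yvec_def last_cols_def algebra_simps)
qed (use L in \<open>simp add: A_h_def b_h_def first_col_def last_cols_def\<close>)

lemma c_h_scalar_prod_plus_d_h:
  assumes "u \<in> carrier_vec m"
  shows "c_h m \<phi>h \<mu>h \<bullet> u + d_h \<phi>h \<mu>h = vCons (d_h \<phi>h \<mu>h) (c_h m \<phi>h \<mu>h) \<bullet> yvec u"
  using assms by (simp add: yvec_def)

lemma socp_feasible_cone_constraint:
  assumes "socp_feasible m \<rho> lam \<beta> LfV LgV Vx \<mu>V \<Sigma>V L \<phi>h \<mu>h"
    and L: "L \<in> carrier_mat k (m + 1)" and "\<beta> \<ge> 0"
  obtains u where "u \<in> carrier_vec m"
    and "\<beta> * sqrt (yvec u \<bullet> ((L\<^sup>T * L) *\<^sub>v yvec u))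
      \<le> vCons (d_h \<phi>h \<mu>h) (c_h m \<phi>h \<mu>h) \<bullet> yvec u"
proof -
  obtain u where u: "u \<in> carrier_vec m"
    and "vnorm2 (A_h m \<beta> L *\<^sub>v u + b_h \<beta> L) \<le> c_h m \<phi>h \<mu>h \<bullet> u + d_h \<phi>h \<mu>h"
    using assms(1) unfolding socp_feasible_def by blast
  moreover have "yvec u \<in> carrier_vec (m + 1)"
    using u by (simp add: yvec_def)
  ultimately show thesis
    using that L \<open>\<beta> \<ge> 0\<close>
    by (simp add: A_h_mult_plus_b_h c_h_scalar_prod_plus_d_h vnorm2_smult vnorm2_mult_mat_vec)
qed

theorem corollary2:
  fixes m :: nat and \<rho> lam \<beta> LfV Vx :: real
    and LgV \<mu>V \<phi>h \<mu>h :: "real vec" and \<Sigma>V \<Sigma>h L :: "real mat"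
  assumes "\<rho> > 0" and "lam > 0" and "\<beta> > 0"
    and "LgV \<in> carrier_vec m" and "\<mu>V \<in> carrier_vec (m + 1)"
    and "sym_pos_semidef (m + 1) \<Sigma>V"
    and "\<phi>h \<in> carrier_vec (m + 1)" and "\<mu>h \<in> carrier_vec (m + 1)"
    and "sym_pos_def (m + 1) \<Sigma>h"
    and "L \<in> carrier_mat (m + 1) (m + 1)" and "L\<^sup>T * L = \<Sigma>h"
    and "socp_feasible m \<rho> lam \<beta> LfV LgV Vx \<mu>V \<Sigma>V L \<phi>h \<mu>h"
  shows "1 - (1 / \<beta>\<^sup>2) *
           (vCons (first_entry \<phi>h + first_entry \<mu>h) (c_h m \<phi>h \<mu>h)
            \<bullet> (the (mat_inverse \<Sigma>h)
                 *\<^sub>v vCons (first_entry \<phi>h + first_entry \<mu>h) (c_h m \<phi>h \<mu>h))) \<le> 0"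
proof -
  note \<beta> = \<open>\<beta> > 0\<close> and L = \<open>L \<in> carrier_mat (m + 1) (m + 1)\<close>
    and LS = \<open>L\<^sup>T * L = \<Sigma>h\<close> and \<Sigma>h = \<open>sym_pos_def (m + 1) \<Sigma>h\<close>
  define \<phi> where "\<phi> = vCons (d_h \<phi>h \<mu>h) (c_h m \<phi>h \<mu>h)"
  have \<phi>: "\<phi> \<in> carrier_vec (m + 1)"
    by (simp add: \<phi>_def c_h_def last_entries_def)
  obtain u where u: "u \<in> carrier_vec m"
    and cone: "\<beta> * sqrt (yvec u \<bullet> (\<Sigma>h *\<^sub>v yvec u)) \<le> \<phi> \<bullet> yvec u"
    using socp_feasible_cone_constraint[OF \<open>socp_feasible _ _ _ _ _ _ _ _ _ _ _ _\<close> L] \<beta> LS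
    unfolding \<phi>_def by auto
  have y: "yvec u \<in> carrier_vec (m + 1)" and "yvec u \<noteq> 0\<^sub>v (m + 1)"
    using u by (auto simp: yvec_def dest: arg_cong[where f = "\<lambda>v. v $ 0"])
  then have pos: "yvec u \<bullet> (\<Sigma>h *\<^sub>v yvec u) > 0"
    using \<Sigma>h unfolding sym_pos_def_def by blast
  obtain B where B: "mat_inverse \<Sigma>h = Some B" "\<Sigma>h * B = 1\<^sub>m (m + 1)"
    "B \<in> carrier_mat (m + 1) (m + 1)"
    using sym_pos_def_mat_inverse[OF \<Sigma>h] by blast
  have "\<beta>\<^sup>2 \<le> \<phi> \<bullet> (B *\<^sub>v \<phi>)"
    using inverse_form_lower_bound[OF L LS B(3,2) \<phi> y pos _ cone] \<beta> by simp
  then show ?thesis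
    using \<beta> B(1) by (simp add: \<phi>_def d_h_def field_simps)
qed

end
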